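(* For every $\epsilon\in(0,1)$ there exist a constant $M>0$ and an infinite strictly increasing sequence of positive integers $n_1<n_2<\cdots$ such that for all $j$, $$R_3(n_j)\ge M\exp\!\left(\frac{\log(2-\epsilon)\,\log n_j}{\log\log n_j}\right).$$
   Context: For a positive integer $n$, $R_3(n)$ denotes the number of ordered triples $(x,y,z)$ of positive integers with $n = xyz + x + y + z$. *)

theory Defs
  imports Complex_Main
begin

definition R3 :: "nat \<Rightarrow> nat" where
  "R3 n = card {(x::nat, y::nat, z::nat).
              x \<ge> 1 \<and> y \<ge> 1 \<and> z \<ge> 1 \<and> n = x * y * z + x + y + z}"

end

theory Submission
  imports Defs "HOL-Library.Infinite_Set" "HOL-Number_Theory.Prime_Powers" "HOL-Real_Asymp.Real_Asymp"
begin

text \<open>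
  Let P be the product of the primes up to N and r = \<pi>(N). Every factorisation P = d e with
  1 < d < P gives the solution (1, d - 1, e - 1), because d e = 1 (d - 1) (e - 1) + 1 + (d - 1) + (e - 1);
  hence R_3(P) \<ge> 2^r - 2. On the other hand ln P \<le> r ln N, while ln ln P \<ge> ln (r ln 2) \<ge> a ln N
  as soon as r ln 2 \<ge> N^a, so that a ln P / ln ln P \<le> r. Chebyshev's bound
  \<pi>(2m) \<ge> m ln 2 / (log_2 (2m) ln (2m)) makes r ln 2 \<ge> N^a hold for all large even N whenever
  a < 1. With a = log_2 (2 - \<epsilon>) this gives R_3(P) \<ge> exp (ln (2 - \<epsilon>) ln P / ln ln P) / 2 for
  infinitely many primorials P.
\<close>

lemma ln_fact_eq_sum_mangoldt:
  assumes "n \<le> K"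
  shows "ln (fact n :: real) = (\<Sum>d=1..K. mangoldt d * real (n div d))"
  using assms
proof (induction n)
  case 0
  then show ?case by simp
next
  case (Suc n)
  have "ln (real (Suc n)) = (\<Sum>d | d dvd Suc n. mangoldt d :: real)"
    using mangoldt_sum[of "Suc n", where 'a=real] by simp
  also have "{d. d dvd Suc n} = {d\<in>{1..K}. d dvd Suc n}"
    using Suc.prems by (auto dest: dvd_imp_le simp: Suc_le_eq intro: dvd_pos_nat[of "Suc n"])
  also have "(\<Sum>d\<in>\<dots>. mangoldt d :: real) = (\<Sum>d=1..K. if d dvd Suc n then mangoldt d else 0)"
    by (rule sum.inter_filter) simp
  finally have ln_Suc: "ln (real (Suc n)) = (\<Sum>d=1..K. if d dvd Suc n then mangoldt d else 0)" .
  have "ln (fact (Suc n) :: real) = ln (real (Suc n)) + ln (fact n)"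
    by (simp add: ln_mult del: of_nat_Suc)
  also have "\<dots> = (\<Sum>d=1..K. mangoldt d * real (Suc n div d))"
    using Suc unfolding ln_Suc Suc.IH[OF Suc_leD[OF Suc.prems]] sum.distrib[symmetric]
    by (intro sum.cong refl) (auto simp: div_Suc dvd_eq_mod_eq_0 algebra_simps)
  finally show ?case .
qed

lemma double_div_le: "2 * m div d \<le> 2 * (m div d) + (1::nat)"
proof (cases "d = 0")
  case False
  have "m < m div d * d + d"
    using False div_mult_mod_eq[of m d] mod_less_divisor[of d m] by linarith
  then have "2 * m < (2 * (m div d) + 2) * d"
    by (simp add: algebra_simps)
  then have "2 * m div d < 2 * (m div d) + 2"
    by (rule less_mult_imp_div_less)
  then show ?thesis by simp
qed simp

lemma ln_central_binomial_le_sum_mangoldt: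
  "ln (real (2*m choose m)) \<le> (\<Sum>d=1..2*m. mangoldt d :: real)"
proof -
  have m_le: "m \<le> 2*m" by simp
  have "fact (2*m) = (2*m choose m) * fact m * (fact m :: nat)"
    using binomial_fact_lemma[of m "2*m"] by (simp add: algebra_simps)
  then have "(fact (2*m) :: real) = real (2*m choose m) * fact m * fact m"
    by (metis of_nat_fact of_nat_mult)
  then have "ln (real (2*m choose m)) = ln (fact (2*m)) - ln (fact m) - ln (fact m)"
    by (simp add: ln_mult)
  also have "\<dots> = (\<Sum>d=1..2*m. mangoldt d * (real (2*m div d) - real (m div d) - real (m div d)))"
    unfolding ln_fact_eq_sum_mangoldt[OF order_refl[of "2*m"]] ln_fact_eq_sum_mangoldt[OF m_le]
    by (simp only: right_diff_distrib sum_subtractf)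
  also have "\<dots> \<le> (\<Sum>d=1..2*m. mangoldt d)"
  proof (intro sum_mono)
    fix d
    have "real (2*m div d) - real (m div d) - real (m div d) \<le> 1"
      using double_div_le[of m d] by linarith
    then show "mangoldt d * (real (2*m div d) - real (m div d) - real (m div d)) \<le> mangoldt d"
      using mangoldt_nonneg[of d] by (simp add: mult_left_le)
  qed
  finally show ?thesis .
qed

lemma card_primepows_le:
  "card {d\<in>{1..N}. primepow d} \<le> card {p. prime p \<and> p \<le> N} * nat \<lfloor>log 2 (real N)\<rfloor>"
proof -
  let ?K = "nat \<lfloor>log 2 (real N)\<rfloor>"
  have "{d\<in>{1..N}. primepow d} \<subseteq> (\<lambda>(p, k). p ^ k) ` ({p. prime p \<and> p \<le> N} \<times> {1..?K})"
  proof
    fix d assume d: "d \<in> {d\<in>{1..N}. primepow d}"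
    then obtain p k where p: "prime p" "k > 0" "d = p ^ k" by (auto simp: primepow_def)
    have "p \<le> d" using p by (auto intro: self_le_power prime_ge_1_nat)
    have "2 ^ k \<le> p ^ k"
      using p by (intro power_mono) (auto simp: prime_ge_2_nat)
    also have "\<dots> \<le> N" using d p by simp
    finally have "real k \<le> log 2 (real N)"
      by (rule le_log2_of_power)
    then have "k \<le> ?K" by (simp add: le_nat_floor)
    then show "d \<in> (\<lambda>(p, k). p ^ k) ` ({p. prime p \<and> p \<le> N} \<times> {1..?K})"
      using d p \<open>p \<le> d\<close> by (auto intro!: image_eqI[of _ _ "(p, k)"])
  qed
  then have "card {d\<in>{1..N}. primepow d} \<le> card ((\<lambda>(p, k). p ^ k) ` ({p. prime p \<and> p \<le> N} \<times> {1..?K}))"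
    by (intro card_mono) auto
  also have "\<dots> \<le> card ({p. prime p \<and> p \<le> N} \<times> {1..?K})"
    by (intro card_image_le) auto
  finally show ?thesis by (simp add: card_cartesian_product)
qed

lemma sum_mangoldt_le:
  "(\<Sum>d=1..N. mangoldt d :: real) \<le> card {p. prime p \<and> p \<le> N} * log 2 (real N) * ln (real N)"
proof -
  have "(\<Sum>d=1..N. mangoldt d :: real) = (\<Sum>d\<in>{d\<in>{1..N}. primepow d}. mangoldt d)"
    by (intro sum.mono_neutral_right) (auto simp: mangoldt_def)
  also have "\<dots> \<le> (\<Sum>d\<in>{d\<in>{1..N}. primepow d}. ln (real N))"
  proof (intro sum_mono)
    fix d assume d: "d \<in> {d\<in>{1..N}. primepow d}"
    then have "mangoldt d \<le> ln (real d)" by (intro mangoldt_le) auto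
    also have "\<dots> \<le> ln (real N)" using d by auto
    finally show "mangoldt d \<le> ln (real N)" .
  qed
  also have "\<dots> = card {d\<in>{1..N}. primepow d} * ln (real N)" by simp
  also have "\<dots> \<le> card {p. prime p \<and> p \<le> N} * nat \<lfloor>log 2 (real N)\<rfloor> * ln (real N)"
    using card_primepows_le[of N]
    by (cases "N = 0") (auto intro!: mult_right_mono simp flip: of_nat_mult)
  also have "\<dots> \<le> card {p. prime p \<and> p \<le> N} * log 2 (real N) * ln (real N)"
    by (cases "N = 0") (auto intro!: mult_right_mono mult_left_mono)
  finally show ?thesis .
qed

lemma central_binomial_ge_power: "(2::real) ^ m \<le> real (2*m choose m)"
proof (cases "m = 0")
  case False
  have "(real (2*m) / real m) ^ m \<le> real (2*m choose m)"
    by (rule binomial_ge_n_over_k_pow_k) simp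
  then show ?thesis using False by simp
qed simp

lemma chebyshev_lower_bound:
  "real m * ln 2 \<le> card {p. prime p \<and> p \<le> 2*m} * log 2 (real (2*m)) * ln (real (2*m))"
proof -
  have "real m * ln 2 = ln ((2::real) ^ m)" by (simp add: ln_realpow)
  also have "\<dots> \<le> ln (real (2*m choose m))"
    using central_binomial_ge_power[of m] by simp
  also have "\<dots> \<le> (\<Sum>d=1..2*m. mangoldt d)" by (rule ln_central_binomial_le_sum_mangoldt)
  also have "\<dots> \<le> card {p. prime p \<and> p \<le> 2*m} * log 2 (real (2*m)) * ln (real (2*m))"
    by (rule sum_mangoldt_le)
  finally show ?thesis .
qed

lemma eventually_powr_le_card_primes:
  fixes a :: real
  assumes "a < 1"
  shows "eventually (\<lambda>m. real (2*m) powr a \<le> card {p. prime p \<and> p \<le> 2*m} * ln 2) sequentially"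
proof -
  have "eventually (\<lambda>x::real. (2 * x) powr a * (log 2 (2 * x) * ln (2 * x))
      \<le> x * ln 2 * ln 2 \<and> x \<ge> 1) at_top"
    using assms by (intro eventually_conj; real_asymp)
  then have "eventually (\<lambda>m. (2 * real m) powr a * (log 2 (2 * real m) * ln (2 * real m))
      \<le> real m * ln 2 * ln 2 \<and> real m \<ge> 1) sequentially"
    by (rule eventually_compose_filterlim[OF _ filterlim_real_sequentially])
  then show ?thesis
  proof (rule eventually_mono)
    fix m :: nat
    let ?L = "log 2 (2 * real m) * ln (2 * real m)"
    assume m: "(2 * real m) powr a * ?L \<le> real m * ln 2 * ln 2 \<and> real m \<ge> 1"
    then have "0 < ?L" by simp
    have "(2 * real m) powr a * ?L \<le> real m * ln 2 * ln 2"
      using m by simp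
    also have "\<dots> \<le> card {p. prime p \<and> p \<le> 2*m} * ?L * ln 2"
      using chebyshev_lower_bound[of m] by (intro mult_right_mono) (simp_all add: mult.assoc)
    also have "\<dots> = (card {p. prime p \<and> p \<le> 2*m} * ln 2) * ?L"
      by (simp only: mult_ac)
    finally have "(2 * real m) powr a * ?L \<le> (card {p. prime p \<and> p \<le> 2*m} * ln 2) * ?L" .
    from mult_right_le_imp_le[OF this \<open>0 < ?L\<close>]
    show "real (2*m) powr a \<le> card {p. prime p \<and> p \<le> 2*m} * ln 2"
      by simp
  qed
qed

lemma card_proper_divisors_le_R3: "card {d. d dvd n \<and> 1 < d \<and> d < n} \<le> R3 n"
proof -
  let ?triple = "\<lambda>d. (1::nat, d - 1, n div d - 1)"
  have "inj_on ?triple {d. d dvd n \<and> 1 < d \<and> d < n}"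
    by (rule inj_onI) auto
  moreover have "?triple ` {d. d dvd n \<and> 1 < d \<and> d < n} \<subseteq>
      {(x, y, z). x \<ge> 1 \<and> y \<ge> 1 \<and> z \<ge> 1 \<and> n = x * y * z + x + y + z}"
  proof safe
    fix d assume d: "d dvd n" "1 < d" "d < n"
    then obtain e where n: "n = d * e" by blast
    with d have "1 < e" by (cases "e \<le> 1") (auto simp: le_Suc_eq)
    have e: "n div d = e" using n d by simp
    have "n = 1 * (d - 1) * (e - 1) + 1 + (d - 1) + (e - 1)"
      using n d \<open>1 < e\<close> by (cases d; cases e) auto
    then show "n = 1 * (d - 1) * (n div d - 1) + 1 + (d - 1) + (n div d - 1)"
      unfolding e .
    show "1 \<le> n div d - 1" using \<open>1 < e\<close> e by simp
  qed auto
  moreover have "finite {(x, y, z). x \<ge> 1 \<and> y \<ge> 1 \<and> z \<ge> 1 \<and> n = x * y * z + x + y + z}"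
    by (rule finite_subset[of _ "{0..n} \<times> {0..n} \<times> {0..n}"]) auto
  ultimately show ?thesis
    unfolding R3_def by (rule card_inj_on_le)
qed

lemma power_card_le_prod_primes:
  assumes "\<forall>p\<in>S. prime p"
  shows "2 ^ card S \<le> (\<Prod>S :: nat)"
proof (cases "finite S")
  case True
  have "(\<Prod>p\<in>S. 2) \<le> (\<Prod>p\<in>S. p)"
    using assms by (intro prod_mono) (auto intro: prime_ge_2_nat)
  then show ?thesis by simp
qed simp

lemma prime_factors_prod_primes:
  assumes "finite S" "\<forall>p\<in>S. prime p"
  shows "prime_factors (\<Prod>S :: nat) = S"
proof -
  have "prime_factors (\<Prod>S) = (\<Union>p\<in>S. prime_factors p)"
    using assms by (subst prime_factors_prod) auto
  also have "\<dots> = S"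
    using assms by (auto simp: prime_prime_factors)
  finally show ?thesis .
qed

lemma one_less_prod_primes:
  assumes "finite S" "\<forall>p\<in>S. prime p" "S \<noteq> {}"
  shows "1 < (\<Prod>S :: nat)"
proof -
  have "(1::nat) < 2 ^ card S"
    using assms by (intro one_less_power) (auto simp: card_gt_0_iff)
  also have "\<dots> \<le> \<Prod>S"
    using assms(2) by (rule power_card_le_prod_primes)
  finally show ?thesis .
qed

lemma inj_on_prod_primes:
  assumes "finite S" "\<forall>p\<in>S. prime p"
  shows "inj_on (\<lambda>T. \<Prod>T :: nat) (Pow S)"
proof (rule inj_onI)
  fix T U assume TU: "T \<in> Pow S" "U \<in> Pow S" "\<Prod>T = \<Prod>U"
  have "T = prime_factors (\<Prod>T)"
    using TU assms by (subst prime_factors_prod_primes) (auto intro: finite_subset)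
  also have "\<dots> = U"
    using TU assms by (subst TU(3), subst prime_factors_prod_primes) (auto intro: finite_subset)
  finally show "T = U" .
qed

lemma prod_primes_proper_divisor:
  assumes "finite S" "\<forall>p\<in>S. prime p" "T \<subseteq> S" "T \<noteq> {}" "T \<noteq> S"
  shows "\<Prod>T dvd \<Prod>S \<and> 1 < \<Prod>T \<and> \<Prod>T < (\<Prod>S :: nat)"
proof -
  have "\<Prod>S = \<Prod>T * \<Prod>(S - T)"
    using prod.subset_diff[OF assms(3,1), of "\<lambda>x. x"] by (simp add: mult.commute)
  moreover have "1 < \<Prod>T"
    using assms by (intro one_less_prod_primes) (auto intro: finite_subset)
  moreover have "1 < \<Prod>(S - T)"
    using assms by (intro one_less_prod_primes) auto
  ultimately show ?thesis by simp
qed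

lemma card_proper_divisors_prod_primes:
  assumes S: "finite S" "\<forall>p\<in>S. prime p"
  shows "2 ^ card S \<le> card {d. d dvd \<Prod>S \<and> 1 < d \<and> d < (\<Prod>S :: nat)} + 2"
proof -
  have "inj_on (\<lambda>T. \<Prod>T) (Pow S - {{}, S})"
    using inj_on_prod_primes[OF S] by (rule inj_on_subset) blast
  then have "card (Pow S - {{}, S}) = card ((\<lambda>T. \<Prod>T) ` (Pow S - {{}, S}))"
    by (rule card_image[symmetric])
  also have "\<dots> \<le> card {d. d dvd \<Prod>S \<and> 1 < d \<and> d < \<Prod>S}"
  proof (rule card_mono)
    show "finite {d. d dvd \<Prod>S \<and> 1 < d \<and> d < \<Prod>S}" by simp
    show "(\<lambda>T. \<Prod>T) ` (Pow S - {{}, S}) \<subseteq> {d. d dvd \<Prod>S \<and> 1 < d \<and> d < \<Prod>S}"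
      using prod_primes_proper_divisor[OF S] by blast
  qed
  finally have "card (Pow S - {{}, S}) \<le> card {d. d dvd \<Prod>S \<and> 1 < d \<and> d < \<Prod>S}" .
  moreover have "card {{}, S} \<le> 2" by (cases "S = {}") auto
  ultimately show ?thesis
    using diff_card_le_card_Diff[of "{{}, S}" "Pow S"] S by (simp add: card_Pow)
qed

lemma exp_ln_div_ln_ln_le:
  fixes a N P :: real and r :: nat
  assumes "0 < a" "1 < N" "2 ^ r \<le> P" "P \<le> N ^ r" and N_powr: "N powr a \<le> r * ln 2"
  shows "exp (a * ln 2 * ln P / ln (ln P)) \<le> 2 ^ r"
proof -
  have "0 < P" by (rule less_le_trans[OF _ assms(3)]) simp
  have "r * ln 2 = ln (2 ^ r)" by (simp add: ln_realpow)
  also have "\<dots> \<le> ln P" using assms(3) \<open>0 < P\<close> by simp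
  finally have "r * ln 2 \<le> ln P" .
  have "ln P \<le> ln (N ^ r)" using assms(2,4) \<open>0 < P\<close> by simp
  also have "\<dots> = r * ln N" using assms(2) by (simp add: ln_realpow)
  finally have "ln P \<le> r * ln N" .
  have "0 < a * ln N" using assms(1,2) by simp
  have "1 < N powr a" using assms(1,2) by (rule gr_one_powr[rotated])
  have "a * ln N = ln (N powr a)" using assms(2) by (simp add: ln_powr)
  also have "\<dots> \<le> ln (ln P)"
    using N_powr \<open>r * ln 2 \<le> ln P\<close> \<open>1 < N powr a\<close> by (subst ln_le_cancel_iff) auto
  finally have "a * ln N \<le> ln (ln P)" .
  have "a * ln P \<le> r * (a * ln N)" using \<open>ln P \<le> r * ln N\<close> assms(1) by (simp add: mult_ac)
  also have "\<dots> \<le> r * ln (ln P)" using \<open>a * ln N \<le> ln (ln P)\<close> by (simp add: mult_left_mono)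
  finally have "a * ln P / ln (ln P) \<le> r"
    using \<open>0 < a * ln N\<close> \<open>a * ln N \<le> ln (ln P)\<close> by (simp add: divide_le_eq)
  have "a * ln 2 * ln P / ln (ln P) = ln 2 * (a * ln P / ln (ln P))"
    by simp
  also have "\<dots> \<le> ln 2 * r"
    using \<open>a * ln P / ln (ln P) \<le> r\<close> by (intro mult_left_mono) auto
  finally have "exp (a * ln 2 * ln P / ln (ln P)) \<le> exp (r * ln 2)"
    by (simp add: mult.commute)
  also have "\<dots> = 2 ^ r" by (simp add: exp_of_nat_mult)
  finally show ?thesis .
qed

definition primorial :: "nat \<Rightarrow> nat" where
  "primorial N = \<Prod>{p. prime p \<and> p \<le> N}"

lemma prime_le_primorial:
  assumes "prime p" "p \<le> N"
  shows "p \<le> primorial N"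
proof -
  have "p dvd primorial N"
    unfolding primorial_def using assms by (intro dvd_prodI) auto
  moreover have "primorial N > 0"
    unfolding primorial_def by (intro prod_pos) (auto intro: prime_gt_0_nat)
  ultimately show ?thesis by (rule dvd_imp_le)
qed

lemma R3_primorial_lower_bound:
  fixes a :: real
  assumes "0 < a" "3 \<le> N" and N_powr: "real N powr a \<le> card {p. prime p \<and> p \<le> N} * ln 2"
  shows "exp (a * ln 2 * ln (primorial N) / ln (ln (primorial N))) / 2 \<le> R3 (primorial N)"
proof -
  define S where "S = {p. prime p \<and> p \<le> N}"
  have S: "finite S" "\<forall>p\<in>S. prime p" by (auto simp: S_def)
  have "{2, 3} \<subseteq> S" using assms(2) by (auto simp: S_def)
  then have "card {2, 3::nat} \<le> card S" by (rule card_mono[OF S(1)])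
  then have "2 \<le> card S" by simp
  then have "(2::real) ^ 2 \<le> 2 ^ card S" by (intro power_increasing) auto
  have "2 ^ card S \<le> R3 (primorial N) + 2"
    using card_proper_divisors_prod_primes[OF S] card_proper_divisors_le_R3[of "primorial N"]
    unfolding primorial_def S_def by linarith
  then have R3_bound: "(2::real) ^ card S \<le> R3 (primorial N) + 2"
    by (metis of_nat_add of_nat_le_iff of_nat_numeral of_nat_power)
  have "(2::nat) ^ card S \<le> primorial N"
    unfolding primorial_def S_def[symmetric] using S(2) by (rule power_card_le_prod_primes)
  moreover have "primorial N \<le> N ^ card S"
    unfolding primorial_def S_def[symmetric] using assms(2) by (intro prod_le_power) (auto simp: S_def)
  ultimately have "exp (a * ln 2 * ln (primorial N) / ln (ln (primorial N))) \<le> 2 ^ card S"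
    using assms N_powr unfolding S_def[symmetric]
    by (intro exp_ln_div_ln_ln_le) (auto simp flip: of_nat_power)
  with R3_bound \<open>(2::real) ^ 2 \<le> 2 ^ card S\<close> show ?thesis
    by simp
qed

lemma infinite_R3_ge:
  fixes c :: real
  assumes "0 < c" "c < ln 2"
  shows "infinite {n. 0 < n \<and> exp (c * ln (real n) / ln (ln (real n))) / 2 \<le> R3 n}" (is "infinite ?G")
proof -
  define a where "a = c / ln 2"
  have "0 < a" "a < 1" "a * ln 2 = c"
    using assms by (simp_all add: a_def)
  obtain m0 where m0: "\<And>m. m \<ge> m0 \<Longrightarrow> real (2*m) powr a \<le> card {p. prime p \<and> p \<le> 2*m} * ln 2"
    using eventually_powr_le_card_primes[OF \<open>a < 1\<close>] unfolding eventually_sequentially by blast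
  have primorial_in_G: "primorial (2*m) \<in> ?G" if "max m0 2 \<le> m" for m
  proof -
    have "3 \<le> 2*m" using that by simp
    moreover have "real (2*m) powr a \<le> card {p. prime p \<and> p \<le> 2*m} * ln 2"
      using that by (intro m0) simp
    ultimately have "exp (a * ln 2 * ln (primorial (2*m)) / ln (ln (primorial (2*m)))) / 2
        \<le> R3 (primorial (2*m))"
      by (rule R3_primorial_lower_bound[OF \<open>0 < a\<close>])
    moreover have "0 < primorial (2*m)"
      using prime_le_primorial[of 2 "2*m"] that by simp
    ultimately show ?thesis
      unfolding \<open>a * ln 2 = c\<close> by simp
  qed
  show ?thesis
    unfolding infinite_nat_iff_unbounded
  proof
    fix B :: nat
    obtain p where "prime p" "B < p" using bigger_prime[of B] by blast
    then have "B < primorial (2 * max (max m0 2) p)"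
      using prime_le_primorial[of p "2 * max (max m0 2) p"] by linarith
    then show "\<exists>n>B. n \<in> ?G" using primorial_in_G[of "max (max m0 2) p"] by auto
  qed
qed

theorem mainTheorem9:
  fixes \<epsilon> :: real
  assumes "0 < \<epsilon>" and "\<epsilon> < 1"
  shows "\<exists>M :: real. M > 0 \<and> (\<exists>n :: nat \<Rightarrow> nat. strict_mono n \<and> (\<forall>j. n j > 0) \<and>
           (\<forall>j. real (R3 (n j)) \<ge>
                 M * exp (ln (2 - \<epsilon>) * ln (real (n j)) / ln (ln (real (n j))))))"
proof -
  have "0 < ln (2 - \<epsilon>)" "ln (2 - \<epsilon>) < ln 2"
    using assms by simp_all
  then obtain n :: "nat \<Rightarrow> nat" where "strict_mono n"
    "\<forall>j. n j \<in> {n. 0 < n \<and> exp (ln (2 - \<epsilon>) * ln (real n) / ln (ln (real n))) / 2 \<le> R3 n}"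
    using infinite_enumerate[OF infinite_R3_ge] by meson
  then show ?thesis
    by (intro exI[of _ "1/2"] conjI exI[of _ n]) auto
qed

end
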